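(* Let $\mathbf{F}$ be a field of characteristic $3$ and let $m,g\in\mathbf{N}_0$ with $B(m,g)\not\equiv0\pmod 3$. For every $u\in\mathbf{N}_0$, the element $(e_{m,g})_{\le u}$ is an idempotent in $S_\mathbf{F}((m+3^{u+1}-1,\,3^{u+1}-1))$.
   Context: For a partition $\lambda=(\lambda_1,\lambda_2)$ with $m=\lambda_1-\lambda_2$, $S_\mathbf{F}(\lambda)=\operatorname{End}_{\mathbf{F}S_r}(M^\lambda)$ ($M^\lambda$ the permutation module on cosets of $S_{\lambda_1}\times S_{\lambda_2}$) is a commutative $\mathbf{F}$-algebra with basis $b(0)=\mathbf{1},b(1),\dots,b(\lambda_2)$ and multiplication $b(i)b(j)=\sum_{h=\max\{i,j\}}^{i+j}\binom{h}{i}\binom{h}{j}\binom{m+i+j}{i+j-h}b(h)$, with the convention $b(a)=0$ for $a>\lambda_2$. $B(m,g)=\binom{m+2g}{g}$. With base-3 digits $(m+2g)_u$, $g_u$, define $I^{(0)}=\{u: g_u=0,(m+2g)_u=0\}$, $J^{(0)}=\{u:g_u=1,(m+2g)_u=2\}$, $I^{(1)}=\{u:g_u=0,(m+2g)_u=1\}$, $J^{(1)}=\{u:g_u=2,(m+2g)_u=2\}$, $I^{(2)}=\{u:g_u=0,(m+2g)_u=2\}$, $J^{(2)}=\{u:g_u=1,(m+2g)_u=1\}$. Define $(e_{m,g})_{\le t}$ as \[\prod_{u\in I^{(0)},u\le t}(\mathbf{1}+b(3^u)-b(2\cdot3^u))\prod_{u\in J^{(0)},u\le t}(b(2\cdot3^u)-b(3^u))\prod_{u\in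 I^{(1)},u\le t}(\mathbf{1}-b(2\cdot3^u))\prod_{u\in J^{(1)},u\le t}b(2\cdot3^u)\prod_{u\in I^{(2)},u\le t}(\mathbf{1}-b(3^u)+b(2\cdot3^u))\prod_{u\in J^{(2)},u\le t}(b(3^u)-b(2\cdot3^u)),\] and $(e_{m,g})_{<t}$ analogously with $u<t$ (so $(e_{m,g})_{<0}=\mathbf{1}$). *)

theory Defs
  imports Main
begin

text \<open>The Schur-type algebra S_F(lambda) for lambda = (lambda1, lambda2), m = lambda1 - lambda2,
  n = lambda2.  Elements are coefficient functions c :: nat => 'a w.r.t. the basis
  b(0),...,b(n); coefficients at indices > n are zero.\<close>

definition sconst :: "nat \<Rightarrow> nat \<Rightarrow> nat \<Rightarrow> nat \<Rightarrow> nat" where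
  "sconst m i j h = (if max i j \<le> h \<and> h \<le> i + j
      then (h choose i) * (h choose j) * ((m + i + j) choose (i + j - h)) else 0)"

definition smult_alg :: "nat \<Rightarrow> nat \<Rightarrow> (nat \<Rightarrow> 'a::comm_ring_1) \<Rightarrow> (nat \<Rightarrow> 'a) \<Rightarrow> (nat \<Rightarrow> 'a)" where
  "smult_alg m n x y = (\<lambda>h. if h \<le> n then
      (\<Sum>i\<le>n. \<Sum>j\<le>n. x i * y j * of_nat (sconst m i j h)) else 0)"

definition sbasis :: "nat \<Rightarrow> nat \<Rightarrow> (nat \<Rightarrow> 'a::comm_ring_1)" where
  "sbasis n a = (\<lambda>h. if h = a \<and> a \<le> n then 1 else 0)"

definition sone :: "nat \<Rightarrow> (nat \<Rightarrow> 'a::comm_ring_1)" where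
  "sone n = sbasis n 0"

definition digit3 :: "nat \<Rightarrow> nat \<Rightarrow> nat" where
  "digit3 x u = (x div 3 ^ u) mod 3"

definition efactor :: "nat \<Rightarrow> nat \<Rightarrow> nat \<Rightarrow> nat \<Rightarrow> (nat \<Rightarrow> 'a::comm_ring_1)" where
  "efactor n m g u =
    (let gu = digit3 g u; su = digit3 (m + 2 * g) u;
         b1 = sbasis n (3 ^ u); b2 = sbasis n (2 * 3 ^ u); one = sone n in
     if gu = 0 \<and> su = 0 then (\<lambda>h. one h + b1 h - b2 h)
     else if gu = 1 \<and> su = 2 then (\<lambda>h. b2 h - b1 h)
     else if gu = 0 \<and> su = 1 then (\<lambda>h. one h - b2 h)
     else if gu = 2 \<and> su = 2 then b2
     else if gu = 0 \<and> su = 2 then (\<lambda>h. one h - b1 h + b2 h)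
     else if gu = 1 \<and> su = 1 then (\<lambda>h. b1 h - b2 h)
     else one)"

definition e_le :: "nat \<Rightarrow> nat \<Rightarrow> nat \<Rightarrow> nat \<Rightarrow> (nat \<Rightarrow> 'a::comm_ring_1)" where
  "e_le n m g t = foldr (\<lambda>u acc. smult_alg m n (efactor n m g u) acc) [0..<Suc t] (sone n)"

end

theory Submission
  imports Defs "HOL-Library.Numeral_Type"
begin

text \<open>Modulo 3, Lucas' theorem factors the binomial coefficients in the structure constant of
  \<open>b(i) b(j)\<close> at \<open>b(h)\<close> over the base-3 digits of \<open>i, j, h\<close>, except that the digits of
  \<open>m + i + j\<close> involve carries. Splitting off the lowest digit therefore expresses the constant
  through the constants one digit higher, with \<open>m\<close> replaced by \<open>m div 3\<close> plus a carry, together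
  with a correction term when the lowest digit of \<open>i + j - h\<close> borrows.

  The coefficient of \<open>(e_{m,g})_{\<le>u}\<close> at \<open>b(h)\<close> is a product over the digits \<open>v\<close> of a
  number depending only on \<open>g\<^sub>v\<close>, \<open>(m + 2g)\<^sub>v\<close> and \<open>h\<^sub>v\<close>. Squaring and splitting off the
  lowest digit, a finite computation shows that the lowest factor reproduces itself and produces
  the carry \<open>[(m + 2g)\<^sub>0 < 2 g\<^sub>0]\<close>; this is exactly the carry that turns \<open>m\<close> into the \<open>m'\<close>
  with \<open>m' + 2 (g div 3) = (m + 2g) div 3\<close>, so induction on the number of digits applies. The
  hypothesis that 3 does not divide \<open>B(m, g)\<close> enters through Lucas' theorem as the digitwise
  condition \<open>g\<^sub>v \<le> (m + 2g)\<^sub>v\<close>, which the finite computation needs.\<close>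

section \<open>Lucas' theorem modulo 3\<close>

lemma char3_three_eq_zero:
  assumes "CHAR('a::comm_ring_1) = 3"
  shows "(3::'a) = 0"
  using of_nat_CHAR[where 'a='a] by (simp add: assms)

lemma char3_two_eq_minus_one:
  assumes "CHAR('a::comm_ring_1) = 3"
  shows "(2::'a) = - 1"
  using char3_three_eq_zero[OF assms] by (simp add: eq_neg_iff_add_eq_0)

lemma char3_of_nat_mod:
  assumes "CHAR('a::comm_ring_1) = 3"
  shows "(of_nat k :: 'a) = of_nat (k mod 3)"
proof -
  have "(of_nat k :: 'a) = of_nat (k mod 3) + 3 * of_nat (k div 3)"
    by (metis of_nat_add of_nat_mult of_nat_numeral mod_mult_div_eq)
  then show ?thesis by (simp add: char3_three_eq_zero[OF assms])
qed

lemma char3_binomial_add_three: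
  assumes "CHAR('a::comm_ring_1) = 3"
  shows "(of_nat ((x + 3) choose k) :: 'a) =
    of_nat (x choose k) + (if 3 \<le> k then of_nat (x choose (k - 3)) else 0)"
proof -
  have three: "(3::'a) = 0" by (rule char3_three_eq_zero[OF assms])
  have expand: "(x + 3) choose (k + 3) =
      (x choose (k + 3)) + 3 * (x choose (k + 2)) + 3 * (x choose (k + 1)) + (x choose k)" for k
    by (simp add: numeral_eq_Suc)
  show ?thesis
  proof (cases "3 \<le> k")
    case True
    then obtain k' where "k = k' + 3" by (metis add.commute le_iff_add)
    then show ?thesis by (simp only: expand) (simp add: three add_ac)
  next
    case False
    then have "k = 0 \<or> k = 1 \<or> k = 2" by auto
    then show ?thesis by (auto simp: numeral_eq_Suc three)
  qed
qed

lemma lucas_three: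
  assumes "CHAR('a::comm_ring_1) = 3" and "a < 3" and "b < 3"
  shows "(of_nat ((a + 3*A) choose (b + 3*B)) :: 'a) = of_nat (a choose b) * of_nat (A choose B)"
proof (induction A arbitrary: B)
  case 0
  show ?case
    using \<open>a < 3\<close> by (cases B) (simp_all add: binomial_eq_0)
next
  case (Suc A)
  have shift: "a + 3 * Suc A = (a + 3*A) + 3" by simp
  show ?case
  proof (cases B)
    case 0
    then show ?thesis
      unfolding shift char3_binomial_add_three[OF assms(1)] using Suc.IH[of 0] \<open>b < 3\<close> by simp
  next
    case (Suc B')
    have "b + 3*B - 3 = b + 3*B'" using Suc by simp
    then show ?thesis
      unfolding shift char3_binomial_add_three[OF assms(1)] using Suc Suc.IH[of B] Suc.IH[of B']
      by (simp add: algebra_simps)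
  qed
qed

lemma lucas_three_mod_div:
  assumes "CHAR('a::comm_ring_1) = 3"
  shows "(of_nat (x choose y) :: 'a) =
    of_nat ((x mod 3) choose (y mod 3)) * of_nat ((x div 3) choose (y div 3))"
  using lucas_three[OF assms, of "x mod 3" "y mod 3" "x div 3" "y div 3"] by simp

lemma lucas_three_power:
  assumes "CHAR('a::comm_ring_1) = 3"
  shows "x < 3^k \<Longrightarrow> y < 3^k \<Longrightarrow>
    (of_nat ((x + 3^k * X) choose (y + 3^k * Y)) :: 'a) = of_nat (x choose y) * of_nat (X choose Y)"
proof (induction k arbitrary: x y)
  case 0
  then show ?case by simp
next
  case (Suc k)
  have "x div 3 < 3^k" "y div 3 < 3^k" using Suc.prems by auto
  have "x + 3^Suc k * X = x mod 3 + 3 * (x div 3 + 3^k * X)"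
   and "y + 3^Suc k * Y = y mod 3 + 3 * (y div 3 + 3^k * Y)" by simp_all
  then have "(of_nat ((x + 3^Suc k * X) choose (y + 3^Suc k * Y)) :: 'a) =
      of_nat ((x mod 3) choose (y mod 3)) * of_nat ((x div 3 + 3^k * X) choose (y div 3 + 3^k * Y))"
    by (simp only: lucas_three[OF assms])
  also have "\<dots> = of_nat (x choose y) * of_nat (X choose Y)"
    using Suc.IH \<open>x div 3 < 3^k\<close> \<open>y div 3 < 3^k\<close> lucas_three_mod_div[OF assms, of x y] by simp
  finally show ?case .
qed

lemma not_three_dvd_binomial_digits:
  assumes "\<not> 3 dvd (s choose g)"
  shows "g mod 3 \<le> s mod 3" and "\<not> 3 dvd ((s div 3) choose (g div 3))"
proof -
  have ch: "CHAR(3) = 3" by simp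
  have "(of_nat (s choose g) :: 3) \<noteq> 0"
    using assms by (simp only: of_nat_eq_0_iff_char_dvd ch) simp
  then have low: "(of_nat ((s mod 3) choose (g mod 3)) :: 3) \<noteq> 0"
    and high: "(of_nat ((s div 3) choose (g div 3)) :: 3) \<noteq> 0"
    using lucas_three_mod_div[OF ch, of s g] mult_not_zero by metis+
  from low show "g mod 3 \<le> s mod 3"
    by (metis binomial_eq_0 not_le of_nat_0)
  from high show "\<not> 3 dvd ((s div 3) choose (g div 3))"
    by (simp only: of_nat_eq_0_iff_char_dvd ch) simp
qed

section \<open>Splitting off the lowest digit of a structure constant\<close>

lemma sconst_eq:
  "sconst m i j h =
    (if h \<le> i + j then (h choose i) * (h choose j) * ((m + i + j) choose (i + j - h)) else 0)"
  unfolding sconst_def by (auto simp: binomial_eq_0)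

lemma sconst_Suc:
  "sconst (Suc m) i j h = sconst m i j h +
    (if h < i + j then (h choose i) * (h choose j) * ((m + i + j) choose (i + j - Suc h)) else 0)"
proof (cases "h < i + j")
  case True
  then obtain d where "i + j - h = Suc d" "i + j - Suc h = d"
    by (metis Suc_diff_Suc diff_Suc_1)
  then show ?thesis using True by (simp add: sconst_eq algebra_simps)
qed (auto simp: sconst_eq)

text \<open>When \<open>h0 > i0 + j0\<close> the lowest digit of \<open>i + j - h\<close> borrows from the next one, and the
  binomial coefficient left over one digit higher is, by Pascal's rule,
  the difference of the structure constants for \<open>M + 1\<close> and \<open>M\<close>.\<close>

definition sconst_carry :: "nat \<Rightarrow> nat \<Rightarrow> nat \<Rightarrow> nat" where
  "sconst_carry m0 i0 j0 = (m0 + i0 + j0) div 3"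

definition sconst_low :: "nat \<Rightarrow> nat \<Rightarrow> nat \<Rightarrow> nat \<Rightarrow> nat" where
  "sconst_low m0 i0 j0 h0 = (if h0 \<le> i0 + j0
     then (h0 choose i0) * (h0 choose j0) * (((m0 + i0 + j0) mod 3) choose (i0 + j0 - h0)) else 0)"

definition sconst_borrow :: "nat \<Rightarrow> nat \<Rightarrow> nat \<Rightarrow> nat \<Rightarrow> nat" where
  "sconst_borrow m0 i0 j0 h0 = (if h0 \<le> i0 + j0 then 0
     else (h0 choose i0) * (h0 choose j0) * (((m0 + i0 + j0) mod 3) choose (i0 + j0 + 3 - h0)))"

definition low_digit_term ::
    "nat \<Rightarrow> nat \<Rightarrow> nat \<Rightarrow> nat \<Rightarrow> (nat \<Rightarrow> 'a::comm_ring_1) \<Rightarrow> nat \<Rightarrow> 'a" where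
  "low_digit_term m0 i0 j0 h0 P M =
    of_nat (sconst_low m0 i0 j0 h0) * P (M + sconst_carry m0 i0 j0)
    + of_nat (sconst_borrow m0 i0 j0 h0)
      * (P (Suc (M + sconst_carry m0 i0 j0)) - P (M + sconst_carry m0 i0 j0))"

lemma sconst_lucas_three:
  fixes m i j h :: nat
  assumes ch: "CHAR('a::comm_ring_1) = 3" and "i0 < 3" "j0 < 3" "h0 < 3"
  defines "s \<equiv> (m mod 3 + i0 + j0) mod 3" and "M \<equiv> m div 3 + sconst_carry (m mod 3) i0 j0"
  shows "(of_nat (sconst m (i0 + 3*i) (j0 + 3*j) (h0 + 3*h)) :: 'a) = (if h0 + 3*h \<le> i0 + 3*i + (j0 + 3*j)
    then of_nat (h0 choose i0) * of_nat (h choose i) * (of_nat (h0 choose j0) * of_nat (h choose j))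
      * of_nat ((s + 3 * (M + i + j)) choose (i0 + 3*i + (j0 + 3*j) - (h0 + 3*h))) else 0)"
proof -
  have sum: "m + (i0 + 3*i) + (j0 + 3*j) = s + 3 * (M + i + j)"
    unfolding s_def M_def sconst_carry_def by simp
  show ?thesis
    unfolding sconst_eq sum using assms(2-4) by (simp add: lucas_three[OF ch])
qed

lemma sconst_digit_split_low:
  fixes m i j h :: nat
  assumes ch: "CHAR('a::comm_ring_1) = 3" and lt: "i0 < 3" "j0 < 3" "h0 < 3" and "h0 \<le> i0 + j0"
  defines "M \<equiv> m div 3 + sconst_carry (m mod 3) i0 j0"
  shows "(of_nat (sconst m (i0 + 3*i) (j0 + 3*j) (h0 + 3*h)) :: 'a) =
    of_nat (sconst_low (m mod 3) i0 j0 h0) * of_nat (sconst M i j h)"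
proof -
  define s where "s = (m mod 3 + i0 + j0) mod 3"
  note lhs = sconst_lucas_three[OF ch lt, of m i j h, folded s_def M_def]
  show ?thesis
  proof (cases "h0 < i0 \<or> h0 < j0")
    case True
    then show ?thesis by (auto simp: lhs sconst_low_def binomial_eq_0)
  next
    case False
    show ?thesis
    proof (cases "h \<le> i + j")
      case True
      have diff: "i0 + 3*i + (j0 + 3*j) - (h0 + 3*h) = (i0 + j0 - h0) + 3 * (i + j - h)"
        using True \<open>h0 \<le> i0 + j0\<close> by simp
      have "s < 3" "i0 + j0 - h0 < 3" using False lt by (simp add: s_def, linarith)
      then have "(of_nat ((s + 3 * (M + i + j)) choose (i0 + 3*i + (j0 + 3*j) - (h0 + 3*h))) :: 'a)
          = of_nat (s choose (i0 + j0 - h0)) * of_nat ((M + i + j) choose (i + j - h))"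
        unfolding diff by (rule lucas_three[OF ch])
      then show ?thesis
        using True \<open>h0 \<le> i0 + j0\<close>
        by (simp add: lhs sconst_eq[of M] sconst_low_def s_def[symmetric])
    next
      case False
      then show ?thesis using \<open>\<not> (h0 < i0 \<or> h0 < j0)\<close> lt by (simp add: lhs sconst_eq[of M])
    qed
  qed
qed

lemma sconst_digit_split_borrow:
  fixes m i j h :: nat
  assumes ch: "CHAR('a::comm_ring_1) = 3" and lt: "i0 < 3" "j0 < 3" "h0 < 3" and "i0 + j0 < h0"
  defines "M \<equiv> m div 3 + sconst_carry (m mod 3) i0 j0"
  shows "(of_nat (sconst m (i0 + 3*i) (j0 + 3*j) (h0 + 3*h)) :: 'a) =
    of_nat (sconst_borrow (m mod 3) i0 j0 h0) * (of_nat (sconst (Suc M) i j h) - of_nat (sconst M i j h))"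
proof -
  define s where "s = (m mod 3 + i0 + j0) mod 3"
  note lhs = sconst_lucas_three[OF ch lt, of m i j h, folded s_def M_def]
  show ?thesis
  proof (cases "h < i + j")
    case True
    have diff: "i0 + 3*i + (j0 + 3*j) - (h0 + 3*h) = (i0 + j0 + 3 - h0) + 3 * (i + j - Suc h)"
      using True \<open>i0 + j0 < h0\<close> lt by simp
    have "s < 3" "i0 + j0 + 3 - h0 < 3" using \<open>i0 + j0 < h0\<close> by (simp_all add: s_def)
    then have "(of_nat ((s + 3 * (M + i + j)) choose (i0 + 3*i + (j0 + 3*j) - (h0 + 3*h))) :: 'a)
        = of_nat (s choose (i0 + j0 + 3 - h0)) * of_nat ((M + i + j) choose (i + j - Suc h))"
      unfolding diff by (rule lucas_three[OF ch])
    then show ?thesis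
      using True \<open>i0 + j0 < h0\<close> lt
      by (simp add: lhs sconst_eq[of M] sconst_Suc[of M] sconst_borrow_def s_def[symmetric])
  next
    case False
    then show ?thesis
      using \<open>i0 + j0 < h0\<close> by (simp add: lhs sconst_eq[of M] sconst_Suc[of M])
  qed
qed

lemma sconst_digit_split:
  fixes m i j h :: nat
  assumes ch: "CHAR('a::comm_ring_1) = 3" and lt: "i0 < 3" "j0 < 3" "h0 < 3"
  shows "(of_nat (sconst m (i0 + 3*i) (j0 + 3*j) (h0 + 3*h)) :: 'a) =
    low_digit_term (m mod 3) i0 j0 h0 (\<lambda>M. of_nat (sconst M i j h)) (m div 3)"
proof (cases "h0 \<le> i0 + j0")
  case True
  then show ?thesis
    by (simp add: sconst_digit_split_low[OF ch lt] low_digit_term_def sconst_borrow_def)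
next
  case False
  then show ?thesis
    by (simp add: sconst_digit_split_borrow[OF ch lt] low_digit_term_def sconst_low_def)
qed

lemma sum_lessThan_three: "(\<Sum>t<3. (f :: nat \<Rightarrow> _) t) = f 0 + f 1 + (f 2 :: 'a::comm_monoid_add)"
  by (simp add: eval_nat_numeral lessThan_Suc add_ac)

lemma sum_lessThan_four: "(\<Sum>t<4. (f :: nat \<Rightarrow> _) t) = f 0 + f 1 + f 2 + (f 3 :: 'a::comm_monoid_add)"
  by (simp add: eval_nat_numeral lessThan_Suc add_ac)

lemma sum_lessThan_three_mult:
  "(\<Sum>i<3 * (N::nat). f i) = (\<Sum>i0<3. \<Sum>i<N. (f (i0 + 3*i) :: 'a::comm_monoid_add))"
proof (induction N)
  case (Suc N)
  have "3 * Suc N = Suc (Suc (Suc (3*N)))" by simp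
  then show ?case
    by (simp only:) (simp add: Suc sum_lessThan_three sum.distrib add_ac)
qed simp

lemma sconst_square_digit_split:
  fixes x y :: "nat \<Rightarrow> 'a::comm_ring_1" and m N h :: nat
  assumes ch: "CHAR('a) = 3" and "h0 < 3"
    and x: "\<And>i0 i. i0 < 3 \<Longrightarrow> x (i0 + 3*i) = c i0 * y i"
  shows "(\<Sum>i<3*N. \<Sum>j<3*N. x i * x j * of_nat (sconst m i j (h0 + 3*h))) =
    (\<Sum>i0<3. \<Sum>j0<3. c i0 * c j0 * low_digit_term (m mod 3) i0 j0 h0
       (\<lambda>M. \<Sum>i<N. \<Sum>j<N. y i * y j * of_nat (sconst M i j h)) (m div 3))"
proof -
  have block: "(\<Sum>i<N. \<Sum>j<N. x (i0 + 3*i) * x (j0 + 3*j) * of_nat (sconst m (i0 + 3*i) (j0 + 3*j) (h0 + 3*h)))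
    = c i0 * c j0 * low_digit_term (m mod 3) i0 j0 h0
       (\<lambda>M. \<Sum>i<N. \<Sum>j<N. y i * y j * of_nat (sconst M i j h)) (m div 3)"
    if "i0 < 3" "j0 < 3" for i0 j0
    by (simp only: x[OF that(1)] x[OF that(2)] sconst_digit_split[OF ch that \<open>h0 < 3\<close>])
      (simp add: low_digit_term_def sum_distrib_left sum_subtractf[symmetric] sum.distrib[symmetric]
        algebra_simps)
  have "(\<Sum>i<3*N. \<Sum>j<3*N. x i * x j * of_nat (sconst m i j (h0 + 3*h))) =
    (\<Sum>i0<3. \<Sum>j0<3. \<Sum>i<N. \<Sum>j<N.
       x (i0 + 3*i) * x (j0 + 3*j) * of_nat (sconst m (i0 + 3*i) (j0 + 3*j) (h0 + 3*h)))"
    by (simp only: sum_lessThan_three_mult sum.swap[of _ "{..<N}" "{..<3::nat}"])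
  then show ?thesis
    using block by simp
qed

section \<open>The digit factors of the idempotent\<close>

text \<open>\<open>factor_coeff g\<^sub>u s\<^sub>u a\<close> is the coefficient of \<open>b(a 3\<^sup>u)\<close> in the \<open>u\<close>-th factor of
  \<open>e_{m,g}\<close>, where \<open>g\<^sub>u\<close> and \<open>s\<^sub>u\<close> are the \<open>u\<close>-th digits of \<open>g\<close> and \<open>m + 2g\<close>; the coefficient
  \<open>-1\<close> is written as its residue 2 modulo 3, and pairs of digits outside the six cases give the
  factor \<open>1\<close>.\<close>

definition factor_coeff :: "nat \<Rightarrow> nat \<Rightarrow> nat \<Rightarrow> nat" where
  "factor_coeff g0 s0 a =
    (if g0 = 0 \<and> s0 = 0 then [1, 1, 2]
     else if g0 = 1 \<and> s0 = 2 then [0, 2, 1]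
     else if g0 = 0 \<and> s0 = 1 then [1, 0, 2]
     else if g0 = 2 \<and> s0 = 2 then [0, 0, 1]
     else if g0 = 0 \<and> s0 = 2 then [1, 2, 1]
     else if g0 = 1 \<and> s0 = 1 then [0, 1, 2]
     else [1, 0, 0]) ! a"

text \<open>The coefficient of \<open>P (M + t)\<close> in \<open>low_digit_term\<close>, again with \<open>-1\<close> written as 2.\<close>

definition low_digit_weight :: "nat \<Rightarrow> nat \<Rightarrow> nat \<Rightarrow> nat \<Rightarrow> nat \<Rightarrow> nat" where
  "low_digit_weight m0 i0 j0 h0 t =
    sconst_low m0 i0 j0 h0 * of_bool (sconst_carry m0 i0 j0 = t)
    + sconst_borrow m0 i0 j0 h0
      * (of_bool (Suc (sconst_carry m0 i0 j0) = t) + 2 * of_bool (sconst_carry m0 i0 j0 = t))"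

lemma low_digit_term_eq_sum:
  assumes ch: "CHAR('a::comm_ring_1) = 3" and "m0 < 3" "i0 < 3" "j0 < 3"
  shows "low_digit_term m0 i0 j0 h0 P M = (\<Sum>t<4. (of_nat (low_digit_weight m0 i0 j0 h0 t) :: 'a) * P (M + t))"
proof -
  have "sconst_carry m0 i0 j0 \<in> {0, 1, 2}"
    using assms(2-4) by (auto simp: sconst_carry_def)
  then show ?thesis
    by (auto simp: low_digit_term_def low_digit_weight_def sum_lessThan_four
        char3_two_eq_minus_one[OF ch] algebra_simps numeral_3_eq_3)
qed

text \<open>\<open>(s0 + 6 - 2 g0) mod 3\<close> is the lowest digit of \<open>m\<close> when \<open>g0\<close> and \<open>s0\<close> are those of \<open>g\<close> and
  \<open>m + 2g\<close>.\<close>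

definition low_square_coeff :: "nat \<Rightarrow> nat \<Rightarrow> nat \<Rightarrow> nat \<Rightarrow> nat" where
  "low_square_coeff g0 s0 h0 t = (\<Sum>i0<3. \<Sum>j0<3. factor_coeff g0 s0 i0 * factor_coeff g0 s0 j0
     * low_digit_weight ((s0 + 6 - 2*g0) mod 3) i0 j0 h0 t)"

text \<open>The heart of the argument: each digit factor is idempotent up to the carry
  \<open>[s0 < 2 g0]\<close>, checked over all admissible digits.\<close>

lemma low_square_coeff_table:
  "\<forall>g0\<in>{0,1,2}. \<forall>s0\<in>{0,1,2}. \<forall>h0\<in>{0,1,2}. \<forall>t\<in>{0,1,2,3}. g0 \<le> s0 \<longrightarrow>
     low_square_coeff g0 s0 h0 t mod 3 = (if t = of_bool (s0 < 2*g0) then factor_coeff g0 s0 h0 else 0)"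
  by code_simp

lemma low_digit_square:
  assumes ch: "CHAR('a::comm_ring_1) = 3" and "g0 \<le> s0" "s0 < 3" "h0 < 3"
  shows "(\<Sum>i0<3. \<Sum>j0<3. (of_nat (factor_coeff g0 s0 i0) :: 'a) * of_nat (factor_coeff g0 s0 j0)
      * low_digit_term ((s0 + 6 - 2*g0) mod 3) i0 j0 h0 P M)
    = of_nat (factor_coeff g0 s0 h0) * P (M + of_bool (s0 < 2*g0))"
proof -
  let ?m0 = "(s0 + 6 - 2*g0) mod 3"
  let ?w = "\<lambda>i0 j0 t. factor_coeff g0 s0 i0 * factor_coeff g0 s0 j0 * low_digit_weight ?m0 i0 j0 h0 t"
  have "(\<Sum>i0<3. \<Sum>j0<3. (of_nat (factor_coeff g0 s0 i0) :: 'a) * of_nat (factor_coeff g0 s0 j0)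
      * low_digit_term ?m0 i0 j0 h0 P M)
    = (\<Sum>i0<3. \<Sum>j0<3. \<Sum>t<4. of_nat (?w i0 j0 t) * P (M + t))"
    by (simp add: low_digit_term_eq_sum[OF ch] sum_distrib_left mult.assoc)
  also have "\<dots> = (\<Sum>t<4. \<Sum>i0<3. \<Sum>j0<3. of_nat (?w i0 j0 t) * P (M + t))"
    by (simp only: sum.swap[of _ "{..<3::nat}" "{..<4::nat}"])
  also have "\<dots> = (\<Sum>t<4. of_nat (low_square_coeff g0 s0 h0 t) * P (M + t))"
    by (simp add: low_square_coeff_def sum_distrib_right)
  also have "\<dots> = (\<Sum>t<4. of_nat (if t = of_bool (s0 < 2*g0) then factor_coeff g0 s0 h0 else 0) * P (M + t))"
  proof (intro sum.cong refl)
    fix t :: nat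
    assume "t \<in> {..<4}"
    then have "t \<in> {0,1,2,3}" by auto
    moreover have "g0 \<in> {0,1,2}" "s0 \<in> {0,1,2}" "h0 \<in> {0,1,2}" using assms(2-4) by auto
    ultimately have "low_square_coeff g0 s0 h0 t mod 3 =
        (if t = of_bool (s0 < 2*g0) then factor_coeff g0 s0 h0 else 0)"
      using low_square_coeff_table \<open>g0 \<le> s0\<close> by blast
    then show "(of_nat (low_square_coeff g0 s0 h0 t) :: 'a) * P (M + t) =
        of_nat (if t = of_bool (s0 < 2*g0) then factor_coeff g0 s0 h0 else 0) * P (M + t)"
      using char3_of_nat_mod[OF ch, of "low_square_coeff g0 s0 h0 t"] by simp
  qed
  also have "\<dots> = of_nat (factor_coeff g0 s0 h0) * P (M + of_bool (s0 < 2*g0))"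
    by (simp add: sum_lessThan_four)
  finally show ?thesis .
qed

section \<open>Idempotence of the digit products\<close>

text \<open>With \<open>s = m + 2g\<close>, \<open>e_coeff (u + 1) g s h\<close> is the coefficient of \<open>b(h)\<close> in
  \<open>(e_{m,g})_{\<le>u}\<close>.\<close>

definition e_coeff :: "nat \<Rightarrow> nat \<Rightarrow> nat \<Rightarrow> nat \<Rightarrow> 'a::comm_ring_1" where
  "e_coeff k g s h = (if h < 3^k
     then \<Prod>v<k. of_nat (factor_coeff (digit3 g v) (digit3 s v) (digit3 h v)) else 0)"

lemma digit3_0: "digit3 x 0 = x mod 3"
  by (simp add: digit3_def)

lemma digit3_Suc: "digit3 x (Suc v) = digit3 (x div 3) v"
  by (simp add: digit3_def div_mult2_eq)

lemma e_coeff_Suc: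
  "e_coeff (Suc k) g s h =
    of_nat (factor_coeff (g mod 3) (s mod 3) (h mod 3)) * e_coeff k (g div 3) (s div 3) (h div 3)"
proof -
  have "h div 3 < 3^k \<longleftrightarrow> h < 3^Suc k" by auto
  then show ?thesis
    by (simp add: e_coeff_def digit3_0 digit3_Suc prod.lessThan_Suc_shift del: prod.lessThan_Suc)
qed

lemma add_double_mod_div_three:
  fixes m g :: nat
  shows "m mod 3 = ((m + 2*g) mod 3 + 6 - 2*(g mod 3)) mod 3"
    and "g mod 3 \<le> (m + 2*g) mod 3 \<Longrightarrow>
      m div 3 + of_bool ((m + 2*g) mod 3 < 2*(g mod 3)) + 2*(g div 3) = (m + 2*g) div 3"
proof -
  define a r b q where "a = m div 3" "r = m mod 3" "b = g div 3" "q = g mod 3"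
  have s: "m + 2*g = (r + 2*q) + 3*(a + 2*b)"
    unfolding a_r_b_q_def
    by (metis (no_types) add.commute add_mult_distrib2 mult_div_mod_eq add.left_commute mult.left_commute)
  have smod: "(m + 2*g) mod 3 = (r + 2*q) mod 3"
    unfolding s by (rule mod_mult_self2)
  have sdiv: "(m + 2*g) div 3 = (r + 2*q) div 3 + (a + 2*b)"
    unfolding s by (simp only: div_mult_self2[of 3] zero_neq_numeral[symmetric] add.commute not_False_eq_True)
  have "r \<in> {0,1,2}" "q \<in> {0,1,2}"
    unfolding a_r_b_q_def by auto
  then show "m mod 3 = ((m + 2*g) mod 3 + 6 - 2*(g mod 3)) mod 3"
    and "g mod 3 \<le> (m + 2*g) mod 3 \<Longrightarrow>
      m div 3 + of_bool ((m + 2*g) mod 3 < 2*(g mod 3)) + 2*(g div 3) = (m + 2*g) div 3"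
    unfolding smod sdiv a_r_b_q_def[symmetric] by auto
qed

lemma e_coeff_idem:
  assumes ch: "CHAR('a::comm_ring_1) = 3"
  shows "\<not> 3 dvd ((m + 2*g) choose g) \<Longrightarrow> h < 3^k \<Longrightarrow>
    (\<Sum>i<3^k. \<Sum>j<3^k. e_coeff k g (m + 2*g) i * e_coeff k g (m + 2*g) j * of_nat (sconst m i j h))
      = (e_coeff k g (m + 2*g) h :: 'a)"
proof (induction k arbitrary: m g h)
  case 0
  then show ?case by (simp add: e_coeff_def sconst_def)
next
  case (Suc k)
  define s where "s = m + 2*g"
  define m' where "m' = m div 3 + of_bool (s mod 3 < 2*(g mod 3))"
  let ?\<phi> = "\<lambda>a. (of_nat (factor_coeff (g mod 3) (s mod 3) a) :: 'a)"
  let ?e = "e_coeff k (g div 3) (s div 3) :: nat \<Rightarrow> 'a"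
  define Q where "Q M = (\<Sum>i<3^k. \<Sum>j<3^k. ?e i * ?e j * of_nat (sconst M i j (h div 3)))" for M
  have digit: "g mod 3 \<le> s mod 3" and high: "\<not> 3 dvd ((s div 3) choose (g div 3))"
    using not_three_dvd_binomial_digits Suc.prems(1) unfolding s_def by blast+
  have "m' + 2*(g div 3) = s div 3"
    using add_double_mod_div_three(2)[OF digit[unfolded s_def]] unfolding m'_def s_def .
  then have IH: "Q m' = ?e (h div 3)"
    unfolding Q_def using Suc.IH[of m' "g div 3" "h div 3"] high Suc.prems(2) by simp
  have "(\<Sum>i<3^Suc k. \<Sum>j<3^Suc k. e_coeff (Suc k) g s i * e_coeff (Suc k) g s j * of_nat (sconst m i j h))
    = (\<Sum>i<3 * 3^k. \<Sum>j<3 * 3^k. e_coeff (Suc k) g s i * e_coeff (Suc k) g s j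
        * of_nat (sconst m i j (h mod 3 + 3 * (h div 3))))"
    by simp
  also have "\<dots> = (\<Sum>i0<3. \<Sum>j0<3. ?\<phi> i0 * ?\<phi> j0 * low_digit_term (m mod 3) i0 j0 (h mod 3) Q (m div 3))"
    unfolding Q_def by (rule sconst_square_digit_split[OF ch]) (simp_all add: e_coeff_Suc)
  also have "\<dots> = ?\<phi> (h mod 3) * Q m'"
    using low_digit_square[OF ch digit _ _, of "h mod 3" Q "m div 3"] add_double_mod_div_three(1)[of m g]
    by (simp add: m'_def s_def)
  also have "\<dots> = e_coeff (Suc k) g s h"
    by (simp add: e_coeff_Suc IH)
  finally show ?case unfolding s_def .
qed

section \<open>The product of the factors\<close>

lemma efactor_eq:
  assumes ch: "CHAR('a::comm_ring_1) = 3" and n: "2 * 3^w \<le> n"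
  shows "(efactor n m g w :: nat \<Rightarrow> 'a) = (\<lambda>i. \<Sum>a<3.
    if i = a * 3^w then of_nat (factor_coeff (digit3 g w) (digit3 (m + 2*g) w) a) else 0)"
proof
  fix i :: nat
  have pos: "0 < (3::nat)^w" by simp
  consider "i = 0" | "i = 3^w" | "i = 2 * 3^w" | "i \<noteq> 0" "i \<noteq> 3^w" "i \<noteq> 2 * 3^w" by blast
  then show "efactor n m g w i = (\<Sum>a<3.
      if i = a * 3^w then of_nat (factor_coeff (digit3 g w) (digit3 (m + 2*g) w) a) else (0::'a))"
    using pos n
    by cases (simp_all add: efactor_def Let_def sbasis_def sone_def sum_lessThan_three factor_coeff_def
        char3_two_eq_minus_one[OF ch])
qed

lemma sconst_power_three_shift:
  assumes ch: "CHAR('a::comm_ring_1) = 3" and "a < 3"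
  shows "(of_nat (sconst m (a * 3^v) (3^Suc v * J) h) :: 'a) =
    (if h = 3^Suc v * J + a * 3^v then 1 else 0)"
proof -
  let ?i = "a * 3^v" and ?j = "3^Suc v * J"
  have i: "?i < 3^Suc v" using \<open>a < 3\<close> by simp
  show ?thesis
  proof (cases "?j \<le> h \<and> h \<le> ?i + ?j")
    case True
    then obtain d where h: "h = d + 3^Suc v * J" and "d \<le> ?i"
      by (metis add.commute add_le_cancel_left le_Suc_ex)
    then have d: "d < 3^Suc v" using i by linarith
    have "(of_nat (h choose ?i) :: 'a) = of_nat (d choose ?i)"
      using lucas_three_power[OF ch d i, of J 0] unfolding h by simp
    moreover have "(of_nat (h choose ?j) :: 'a) = 1"
      using lucas_three_power[OF ch d, of 0 J] unfolding h by simp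
    ultimately show ?thesis
      using True \<open>d \<le> ?i\<close> by (cases "d = ?i") (auto simp: sconst_eq h binomial_eq_0)
  next
    case False
    then show ?thesis by (auto simp: sconst_def)
  qed
qed

lemma power_three_digit_decomp:
  fixes h :: nat
  assumes "a < 3"
  shows "h = 3^Suc w * J + a * 3^w \<longleftrightarrow> J = h div 3^Suc w \<and> 3^w dvd h \<and> h div 3^w mod 3 = a"
proof -
  define p where "p = (3::nat)^Suc w"
  have "a * 3^w < p" "0 < p" using \<open>a < 3\<close> by (simp_all add: p_def)
  then have "h = p * J + a * 3^w \<longleftrightarrow> J = h div p \<and> h mod p = a * 3^w"
    by (metis add.commute div_less div_mult_self2 mod_less mod_mult_self2 mult_div_mod_eq add_cancel_right_left not_less_zero)
  moreover have "h mod p = a * 3^w \<longleftrightarrow> 3^w dvd h \<and> h div 3^w mod 3 = a"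
  proof -
    have decomp: "h mod p = 3^w * (h div 3^w mod 3) + h mod 3^w"
      unfolding p_def by (metis mod_mult2_eq power_Suc2)
    have "h mod 3^w < 3^w" by simp
    show ?thesis
    proof
      assume "h mod p = a * 3^w"
      then have eq: "3^w * (h div 3^w mod 3) + h mod 3^w = 3^w * a"
        by (simp add: decomp mult.commute)
      have "(3^w * (h div 3^w mod 3) + h mod 3^w) div 3^w = h div 3^w mod 3"
        using \<open>h mod 3^w < 3^w\<close> by simp
      then have "h div 3^w mod 3 = a" unfolding eq by simp
      with eq show "3^w dvd h \<and> h div 3^w mod 3 = a" by (simp add: dvd_eq_mod_eq_0)
    next
      assume "3^w dvd h \<and> h div 3^w mod 3 = a"
      then show "h mod p = a * 3^w"
        unfolding decomp by (simp add: mult.commute dvd_eq_mod_eq_0)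
    qed
  qed
  ultimately show ?thesis unfolding p_def by simp
qed

lemma sum_sconst_power_three_shift:
  assumes ch: "CHAR('a::comm_ring_1) = 3" and "a < 3" and "h \<le> n"
  shows "(\<Sum>j\<le>n. (if 3^Suc w dvd j then z (j div 3^Suc w) else 0) * (of_nat (sconst m (a * 3^w) j h) :: 'a))
    = (if 3^w dvd h \<and> h div 3^w mod 3 = a then z (h div 3^Suc w) else 0)"
proof -
  let ?j = "3^Suc w * (h div 3^Suc w)"
  define C where "C \<longleftrightarrow> 3^w dvd h \<and> h div 3^w mod 3 = a"
  have "(if 3^Suc w dvd j then z (j div 3^Suc w) else 0) * (of_nat (sconst m (a * 3^w) j h) :: 'a) =
      (if C then (if j = ?j then z (h div 3^Suc w) else 0) else 0)" for j
  proof (cases "3^Suc w dvd j")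
    case True
    then obtain J where "j = 3^Suc w * J" by blast
    then show ?thesis
      using sconst_power_three_shift[OF ch \<open>a < 3\<close>, of m w J h]
        power_three_digit_decomp[OF \<open>a < 3\<close>, of h w J]
      unfolding C_def by auto
  qed (auto simp: C_def)
  moreover have "?j \<le> n"
    using \<open>h \<le> n\<close> by (metis div_mult_self1_is_m le_trans mult.commute times_div_less_eq_dividend)
  ultimately show ?thesis
    unfolding C_def[symmetric] by (cases C) simp_all
qed

lemma smult_alg_sparse_left:
  fixes c z :: "nat \<Rightarrow> 'a::comm_ring_1"
  assumes ch: "CHAR('a) = 3" and n: "2 * 3^w \<le> n"
  shows "smult_alg m n (\<lambda>i. \<Sum>a<3. if i = a * 3^w then c a else 0)
      (\<lambda>j. if 3^Suc w dvd j then z (j div 3^Suc w) else 0) h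
    = (if h \<le> n \<and> 3^w dvd h then c (h div 3^w mod 3) * z (h div 3^Suc w) else 0)"
proof (cases "h \<le> n")
  case True
  define T where "T i = (\<Sum>j\<le>n. (if 3^Suc w dvd j then z (j div 3^Suc w) else 0) * of_nat (sconst m i j h))"
    for i
  have "a * 3^w \<le> n" if "a < 3" for a :: nat
    using that n by (metis le_trans less_Suc_eq_le mult_le_mono1 numeral_2_eq_2 numeral_3_eq_3)
  then have "(\<Sum>i\<le>n. (\<Sum>a<3. if i = a * 3^w then c a else 0) * T i)
      = (\<Sum>a<3. \<Sum>i\<le>n. if i = a * 3^w then c a * T i else 0)"
    by (subst sum.swap) (auto simp: sum_distrib_right intro!: sum.cong)
  also have "\<dots> = (\<Sum>a<3. if 3^w dvd h \<and> h div 3^w mod 3 = a then c a * z (h div 3^Suc w) else 0)"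
  proof (intro sum.cong refl)
    fix a :: nat
    assume "a \<in> {..<3}"
    then have "a < 3" by simp
    then have "(\<Sum>i\<le>n. if i = a * 3^w then c a * T i else 0) = c a * T (a * 3^w)"
      using \<open>\<And>a. a < 3 \<Longrightarrow> a * 3^w \<le> n\<close> by (simp add: sum.delta)
    also have "T (a * 3^w) = (if 3^w dvd h \<and> h div 3^w mod 3 = a then z (h div 3^Suc w) else 0)"
      unfolding T_def by (rule sum_sconst_power_three_shift[OF ch \<open>a < 3\<close> True])
    finally show "(\<Sum>i\<le>n. if i = a * 3^w then c a * T i else 0) =
        (if 3^w dvd h \<and> h div 3^w mod 3 = a then c a * z (h div 3^Suc w) else 0)"
      by simp
  qed
  also have "\<dots> = (if 3^w dvd h then c (h div 3^w mod 3) * z (h div 3^Suc w) else 0)"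
    by (simp add: sum.delta' conj_commute[of "3^w dvd h"] if_distrib cong: if_cong)
  finally show ?thesis
    using True by (simp add: smult_alg_def T_def sum_distrib_left mult.assoc)
qed (simp add: smult_alg_def)

lemma e_coeff_Suc_div_power:
  assumes "w \<le> u"
  shows "e_coeff (Suc (u - w)) (g div 3^w) (s div 3^w) (h div 3^w) =
    (if h < 3^Suc u then of_nat (factor_coeff (digit3 g w) (digit3 s w) (h div 3^w mod 3))
      * e_coeff (u - w) (g div 3^Suc w) (s div 3^Suc w) (h div 3^Suc w) else 0)"
proof (cases "h < 3^Suc u")
  case True
  have "x div 3^w div 3 = x div 3^Suc w" for x :: nat
    by (metis div_mult2_eq power_Suc2)
  then show ?thesis
    unfolding e_coeff_Suc digit3_def using True by simp
next
  case False
  have "(3::nat)^w * 3^Suc (u - w) = 3^Suc u"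
    using assms by (simp flip: power_add)
  then have "\<not> h div 3^w < 3^Suc (u - w)"
    using False by (metis div_less_iff_less_mult mult.commute zero_less_numeral zero_less_power)
  then show ?thesis
    using False by (simp only: e_coeff_def if_False)
qed

lemma e_coeff_0_div_power:
  "(if 3^k dvd h then e_coeff 0 g s (h div 3^k) else 0) = (if h = 0 then 1 else (0::'a::comm_ring_1))"
  by (auto simp: e_coeff_def elim!: dvdE)

lemma foldr_efactor_eq:
  assumes ch: "CHAR('a::comm_ring_1) = 3" and n: "n = 3^Suc u - 1" and "w \<le> Suc u"
  shows "foldr (\<lambda>v acc. smult_alg m n (efactor n m g v) acc) [w..<Suc u] (sone n) =
    (\<lambda>h. if 3^w dvd h then e_coeff (Suc u - w) (g div 3^w) ((m + 2*g) div 3^w) (h div 3^w) else (0::'a))"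
  using \<open>w \<le> Suc u\<close>
proof (induction w rule: inc_induct)
  case base
  show ?case
    unfolding diff_self_eq_0 e_coeff_0_div_power by (simp add: sone_def sbasis_def fun_eq_iff)
next
  case (step w)
  define s where "s = m + 2*g"
  have "w \<le> u" using step.hyps by simp
  have "0 < (3::nat)^Suc u" by simp
  then have below: "h \<le> n \<longleftrightarrow> h < 3^Suc u" for h
    unfolding n by linarith
  have "3^w \<le> (3::nat)^u" "1 \<le> (3::nat)^w" using \<open>w \<le> u\<close> by (simp_all add: power_increasing)
  then have n': "2 * 3^w \<le> n" unfolding n power_Suc by linarith
  have "[w..<Suc u] = w # [Suc w..<Suc u]" using step.hyps by (simp add: upt_conv_Cons)
  then have "foldr (\<lambda>v acc. smult_alg m n (efactor n m g v) acc) [w..<Suc u] (sone n :: nat \<Rightarrow> 'a) =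
      smult_alg m n (efactor n m g w)
        (foldr (\<lambda>v acc. smult_alg m n (efactor n m g v) acc) [Suc w..<Suc u] (sone n))"
    by (simp only: foldr.simps comp_apply)
  also have "\<dots> = smult_alg m n (efactor n m g w) (\<lambda>h. if 3^Suc w dvd h
        then e_coeff (u - w) (g div 3^Suc w) (s div 3^Suc w) (h div 3^Suc w) else 0)"
    using step.IH unfolding s_def diff_Suc_Suc by (rule arg_cong)
  also have "\<dots> = (\<lambda>h. if h \<le> n \<and> 3^w dvd h then
      of_nat (factor_coeff (digit3 g w) (digit3 s w) (h div 3^w mod 3))
      * e_coeff (u - w) (g div 3^Suc w) (s div 3^Suc w) (h div 3^Suc w) else 0)"
    unfolding efactor_eq[OF ch n'] s_def by (rule ext, rule smult_alg_sparse_left[OF ch n'])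
  also have "\<dots> = (\<lambda>h. if 3^w dvd h then e_coeff (Suc (u - w)) (g div 3^w) (s div 3^w) (h div 3^w) else 0)"
    unfolding e_coeff_Suc_div_power[OF \<open>w \<le> u\<close>] below by (rule ext) simp
  finally show ?case
    unfolding s_def Suc_diff_le[OF \<open>w \<le> u\<close>] .
qed

theorem proposition5p1:
  fixes m g u :: nat
  assumes "CHAR('a::field) = 3"
    and "\<not> (3 dvd ((m + 2 * g) choose g))"
  shows "smult_alg m (3 ^ (u + 1) - 1) (e_le (3 ^ (u + 1) - 1) m g u :: nat \<Rightarrow> 'a)
           (e_le (3 ^ (u + 1) - 1) m g u)
         = e_le (3 ^ (u + 1) - 1) m g u"
proof -
  define n :: nat where "n = 3^(u + 1) - 1"
  define e where "e = (e_coeff (Suc u) g (m + 2*g) :: nat \<Rightarrow> 'a)"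
  have "0 < (3::nat)^(u + 1)" by simp
  then have below: "h \<le> n \<longleftrightarrow> h < 3^Suc u" for h
    unfolding n_def Suc_eq_plus1 by linarith
  have e_le: "e_le n m g u = e"
    using foldr_efactor_eq[OF assms(1), of n u 0] by (simp add: n_def e_le_def e_def)
  have "smult_alg m n e e h = e h" for h
  proof (cases "h \<le> n")
    case True
    have "{..n} = {..<3^Suc u}" using below by auto
    then show ?thesis
      using True e_coeff_idem[OF assms(1,2), of h "Suc u"] by (simp add: smult_alg_def e_def below)
  next
    case False
    then show ?thesis by (simp add: smult_alg_def e_def e_coeff_def below)
  qed
  then show ?thesis
    unfolding n_def[symmetric] e_le by blast
qed

end
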